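(* Let $K$ and $K'$ be two non-degenerate CMIs, with $\mathrm{can}(\mathrm{pur}(K))=(C,\langle\mathbb I_K,\mathbb I_K,P_i,1\le i\le t\rangle)$ and $\mathrm{can}(\mathrm{pur}(K'))=(C',\langle\mathbb I_{K'},\mathbb I_{K'},P'_j,1\le j\le s\rangle)$. If $K$ implies $K'$, then $C\subseteq C'$.
   Context: Setting: $X_1,\dots,X_n$ jointly distributed discrete random variables with $H(X_i)<\infty$; distribution unspecified. $X_\alpha=(X_i,i\in\alpha)$, $X_\emptyset$ constant. A CMI is $K=(C,\langle Q_1,\dots,Q_k\rangle)$, $k\ge0$, $C\subseteq\{1,\dots,n\}$, $\langle\cdot\rangle$ an unordered multiset of subsets; valid (for a given distribution) if $\sum_iH(X_{Q_i}|X_C)-H(X_{Q_1},\dots,X_{Q_k}|X_C)=0$. Empty members may be deleted. Degenerate = valid for every distribution, written $(\cdot,\langle\ \rangle)$. "$K$ implies $K'$": for every joint distribution, if $K$ is valid then $K'$ is valid. $\mathrm{pur}(K)=(C,\langle Q_i\setminus C:Q_i\setminus C\ne\emptyset\rangle)$. For pure $K$: $\mathbb I_K$ = indices lying in at least two members of the collection if $k\ge2$, else $\emptyset$; $P_1,\dots,P_t$ the nonempty sets among $Q_i\setminus\mathbb I_K$; $\mathrm{can}(K)=(\cdot,\langle\ \rangle)$ if $k\le1$, $(C,\langle\mathbb I_K,\mathbb I_K\rangle)$ if $k\ge2,\mathbb I_K\ne\emptyset,t\le1$, $(C,\langle P_1..P_t\rangle)$ if $k\ge2,\mathbb I_K=\emptyset$,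 $(C,\langle\mathbb I_K,\mathbb I_K,P_1..P_t\rangle)$ if $k\ge2,\mathbb I_K\ne\emptyset,t\ge2$. General-form notation $(C,\langle\mathbb I_K,\mathbb I_K,P_i,1\le i\le t\rangle)$: copies of $\mathbb I_K$ omitted when empty, and $t=0$ for the case $(C,\langle\mathbb I_K,\mathbb I_K\rangle)$. *)

theory Defs
  imports "HOL-Probability.Probability" "HOL-Library.Multiset"
begin

text \<open>A joint distribution of X_1..X_n: a pmf on outcomes (nat => nat);
coordinate i (1 <= i <= n) is X_i. Countable discrete alphabets are encoded in nat.\<close>

type_synonym outcome = "nat \<Rightarrow> nat"

text \<open>A CMI (C, <Q_1..Q_k>): conditioning set and a multiset of subsets.\<close>
type_synonym cmi = "nat set \<times> nat set multiset"

definition marg :: "outcome pmf \<Rightarrow> nat set \<Rightarrow> outcome pmf" where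
  "marg p A = map_pmf (\<lambda>x. restrict x A) p"

definition ent_term :: "outcome pmf \<Rightarrow> nat set \<Rightarrow> outcome \<Rightarrow> real" where
  "ent_term p A v = (let q = pmf (marg p A) v in if q = 0 then 0 else - q * ln q)"

definition ent :: "outcome pmf \<Rightarrow> nat set \<Rightarrow> real" where
  "ent p A = (\<Sum>\<^sub>\<infinity> v. ent_term p A v)"

definition admissible :: "nat \<Rightarrow> outcome pmf \<Rightarrow> bool" where
  "admissible n p \<longleftrightarrow> (\<forall>i\<in>{1..n}. ent_term p {i} summable_on UNIV)"

definition cmi_wf :: "nat \<Rightarrow> cmi \<Rightarrow> bool" where
  "cmi_wf n K \<longleftrightarrow> fst K \<subseteq> {1..n} \<and> (\<forall>Q\<in>#snd K. Q \<subseteq> {1..n})"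

definition cent :: "outcome pmf \<Rightarrow> nat set \<Rightarrow> nat set \<Rightarrow> real" where
  "cent p A C = ent p (A \<union> C) - ent p C"

definition cmi_valid :: "outcome pmf \<Rightarrow> cmi \<Rightarrow> bool" where
  "cmi_valid p K \<longleftrightarrow>
     (\<Sum>Q\<in>#snd K. cent p Q (fst K)) - cent p (\<Union>(set_mset (snd K))) (fst K) = 0"

definition cmi_degenerate :: "nat \<Rightarrow> cmi \<Rightarrow> bool" where
  "cmi_degenerate n K \<longleftrightarrow> (\<forall>p. admissible n p \<longrightarrow> cmi_valid p K)"

definition cmi_implies :: "nat \<Rightarrow> cmi \<Rightarrow> cmi \<Rightarrow> bool" where
  "cmi_implies n K K' \<longleftrightarrow> (\<forall>p. admissible n p \<longrightarrow> cmi_valid p K \<longrightarrow> cmi_valid p K')"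

definition pur :: "cmi \<Rightarrow> cmi" where
  "pur K = (fst K, image_mset (\<lambda>Q. Q - fst K) (filter_mset (\<lambda>Q. Q - fst K \<noteq> {}) (snd K)))"

definition II :: "cmi \<Rightarrow> nat set" where
  "II K = (if size (snd K) \<ge> 2
           then {i. size (filter_mset (\<lambda>Q. i \<in> Q) (snd K)) \<ge> 2} else {})"

definition Ps :: "cmi \<Rightarrow> nat set multiset" where
  "Ps K = filter_mset (\<lambda>P. P \<noteq> {}) (image_mset (\<lambda>Q. Q - II K) (snd K))"

text \<open>Canonical form; None represents the degenerate CMI (.,< >).\<close>
definition can :: "cmi \<Rightarrow> cmi option" where
  "can K = (if size (snd K) \<le> 1 then None
            else if II K \<noteq> {} \<and> size (Ps K) \<le> 1 then Some (fst K, {#II K, II K#})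
            else if II K = {} then Some (fst K, Ps K)
            else Some (fst K, {#II K, II K#} + Ps K))"

end

theory Submission
  imports Defs
begin

text \<open>Let \<open>X\<^sub>i\<close> be constant for \<open>i \<in> C'\<close> and equal to one common fair bit for all other \<open>i\<close>.
If some \<open>c \<in> C\<close> lies outside \<open>C'\<close>, then \<open>X\<^sub>C\<close> reveals the bit, so every conditional entropy given
\<open>X\<^sub>C\<close> vanishes and \<open>K\<close> is valid. Given \<open>X\<^bsub>C'\<^esub>\<close>, each member of \<open>K'\<close> not contained in \<open>C'\<close>
has entropy \<open>ln 2\<close>, and so does their union; since \<open>can (pur K')\<close> exists there are at least two such
members, and \<open>K'\<close> fails.\<close>

lemma map_pmf_of_set_bool: "map_pmf g (pmf_of_set (UNIV :: bool set)) = pmf_of_set (range g)"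
proof (cases "inj g")
  case True
  then show ?thesis by (simp add: map_pmf_of_set_inj)
next
  case False
  then have "g False = g True"
    by (metis (full_types) injI)
  then have "g = (\<lambda>_. g True)"
    by (metis (full_types))
  then obtain c where "g = (\<lambda>_. c)" ..
  then show ?thesis
    by (simp add: pmf_of_set_singleton image_constant_conv)
qed

lemma has_sum_ent_term_uniform:
  assumes "marg p A = pmf_of_set S" "finite S" "S \<noteq> {}"
  shows "(ent_term p A has_sum ln (card S)) UNIV"
proof -
  have "ent_term p A v = (if v \<in> S then ln (card S) / card S else 0)" for v
    using assms by (simp add: ent_term_def ln_div)
  moreover have "((\<lambda>v. ln (card S) / card S) has_sum ln (card S)) S"
    using assms by (intro has_sum_finiteI) auto
  ultimately show ?thesis
    by (subst has_sum_cong_neutral[where T = S]) auto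
qed

definition shared_coin :: "nat set \<Rightarrow> outcome pmf" where
  "shared_coin D = map_pmf (\<lambda>b i. of_bool (b \<and> i \<notin> D)) (pmf_of_set UNIV)"

lemma marg_shared_coin:
  "marg (shared_coin D) A = pmf_of_set (range (\<lambda>b. restrict (\<lambda>i. of_bool (b \<and> i \<notin> D)) A))"
  unfolding marg_def shared_coin_def by (subst map_pmf_comp) (simp add: o_def map_pmf_of_set_bool)

lemma card_range_restrict_coin:
  "card (range (\<lambda>b. restrict (\<lambda>i. of_bool (b \<and> i \<notin> D)) A :: outcome)) = (if A \<subseteq> D then 1 else 2)"
proof (cases "A \<subseteq> D")
  case True
  then have "restrict (\<lambda>i. of_bool (b \<and> i \<notin> D)) A = (restrict (\<lambda>_. 0) A :: outcome)" for b
    by (intro restrict_ext) auto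
  then show ?thesis using True by (simp add: image_constant_conv)
next
  case False
  then obtain a where a: "a \<in> A" "a \<notin> D" by blast
  have "inj (\<lambda>b. restrict (\<lambda>i. of_bool (b \<and> i \<notin> D)) A :: outcome)"
  proof (rule injI)
    fix b b' :: bool
    assume "restrict (\<lambda>i. of_bool (b \<and> i \<notin> D)) A = (restrict (\<lambda>i. of_bool (b' \<and> i \<notin> D)) A :: outcome)"
    then have "restrict (\<lambda>i. of_bool (b \<and> i \<notin> D)) A a = (restrict (\<lambda>i. of_bool (b' \<and> i \<notin> D)) A a :: nat)"
      by simp
    then show "b = b'" using a by (simp add: of_bool_eq_iff)
  qed
  then show ?thesis using False by (simp add: card_image)
qed

lemma has_sum_ent_term_shared_coin:
  "(ent_term (shared_coin D) A has_sum (if A \<subseteq> D then 0 else ln 2)) UNIV"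
  using has_sum_ent_term_uniform[OF marg_shared_coin[of D A]]
  by (cases "A \<subseteq> D") (simp_all add: card_range_restrict_coin)

lemma ent_shared_coin: "ent (shared_coin D) A = (if A \<subseteq> D then 0 else ln 2)"
  unfolding ent_def using has_sum_ent_term_shared_coin by (rule infsumI)

lemma admissible_shared_coin: "admissible n (shared_coin D)"
  unfolding admissible_def using has_sum_ent_term_shared_coin by (blast intro: has_sum_imp_summable)

lemma cent_shared_coin: "cent (shared_coin D) A C = (if C \<subseteq> D \<and> \<not> A \<subseteq> D then ln 2 else 0)"
  by (simp add: cent_def ent_shared_coin)

lemma cmi_valid_shared_coin_if_not_subset:
  assumes "\<not> fst K \<subseteq> D"
  shows "cmi_valid (shared_coin D) K"
  using assms by (simp add: cmi_valid_def cent_shared_coin)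

lemma sum_mset_if_const:
  "(\<Sum>x\<in>#M. if P x then c else 0) = of_nat (size (filter_mset P M)) * (c :: 'a :: semiring_1)"
  by (induction M) (auto simp: algebra_simps)

lemma cmi_valid_shared_coin_iff:
  "cmi_valid (shared_coin (fst K)) K \<longleftrightarrow> size (filter_mset (\<lambda>Q. \<not> Q \<subseteq> fst K) (snd K)) \<le> 1"
proof -
  let ?m = "size (filter_mset (\<lambda>Q. \<not> Q \<subseteq> fst K) (snd K))"
  have sum: "(\<Sum>Q\<in>#snd K. cent (shared_coin (fst K)) Q (fst K)) = ?m * ln 2"
    by (simp add: cent_shared_coin sum_mset_if_const)
  have union: "cent (shared_coin (fst K)) (\<Union>(set_mset (snd K))) (fst K) = (if ?m = 0 then 0 else ln 2)"
    by (auto simp: cent_shared_coin)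
  have "real m * ln 2 - (if m = 0 then 0 else ln 2) = 0 \<longleftrightarrow> m \<le> 1" for m :: nat
    using ln_gt_zero[of 2] by (cases "m = 0") (auto simp: left_diff_distrib[symmetric])
  then show ?thesis
    unfolding cmi_valid_def sum union .
qed

lemma can_pur_SomeD:
  assumes "can (pur K) = Some (C, M)"
  shows "C = fst K" "2 \<le> size (filter_mset (\<lambda>Q. \<not> Q \<subseteq> fst K) (snd K))"
proof -
  have "filter_mset (\<lambda>Q. Q - fst K \<noteq> {}) (snd K) = filter_mset (\<lambda>Q. \<not> Q \<subseteq> fst K) (snd K)"
    by (rule filter_mset_cong) auto
  then show "C = fst K" "2 \<le> size (filter_mset (\<lambda>Q. \<not> Q \<subseteq> fst K) (snd K))"
    using assms by (auto simp: can_def pur_def split: if_splits)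
qed

theorem mainTheorem6:
  fixes n :: nat and K K' :: cmi and C C' :: "nat set" and M M' :: "nat set multiset"
  assumes "cmi_wf n K" and "cmi_wf n K'"
    and "\<not> cmi_degenerate n K" and "\<not> cmi_degenerate n K'"
    and "can (pur K) = Some (C, M)" and "can (pur K') = Some (C', M')"
    and "cmi_implies n K K'"
  shows "C \<subseteq> C'"
proof (rule ccontr)
  assume "\<not> C \<subseteq> C'"
  have C: "C = fst K" and C': "C' = fst K'"
    and two_outside: "2 \<le> size (filter_mset (\<lambda>Q. \<not> Q \<subseteq> fst K') (snd K'))"
    using can_pur_SomeD assms(5,6) by blast+
  have "cmi_valid (shared_coin C') K"
    using \<open>\<not> C \<subseteq> C'\<close> C by (simp add: cmi_valid_shared_coin_if_not_subset)
  then have "cmi_valid (shared_coin (fst K')) K'"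
    using assms(7) admissible_shared_coin C' by (simp add: cmi_implies_def)
  with two_outside show False
    by (simp add: cmi_valid_shared_coin_iff)
qed

end
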